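(* Let $\boldsymbol{f},\bar{\boldsymbol{f}}\in\mathbb{R}^E$ with $\boldsymbol{u}^-_e<\boldsymbol{f}_e<\boldsymbol{u}^+_e$ for all $e$. If $\|\mathbf{L}(\boldsymbol{f})(\boldsymbol{f}-\bar{\boldsymbol{f}})\|_\infty\le\varepsilon$ for some $\varepsilon\le1/100$, then $\boldsymbol{\ell}(\boldsymbol{f})\approx_{1+3\varepsilon}\boldsymbol{\ell}(\bar{\boldsymbol{f}})$.
   Context: $G=(V,E)$ is a directed graph with $m=|E|$ edges; lower/upper capacities $\boldsymbol{u}^-,\boldsymbol{u}^+\in\mathbb{Z}^E$ are integers bounded in absolute value by $U$. $\alpha=1/(1000\log(mU))$. Lengths $\boldsymbol{\ell}(\boldsymbol{f})_e=(\boldsymbol{u}^+_e-\boldsymbol{f}_e)^{-1-\alpha}+(\boldsymbol{f}_e-\boldsymbol{u}^-_e)^{-1-\alpha}$ and $\mathbf{L}(\boldsymbol{f})=\mathrm{diag}(\boldsymbol{\ell}(\boldsymbol{f}))$. For positive vectors, $\boldsymbol{x}\approx_\beta\boldsymbol{y}$ means $\beta^{-1}\boldsymbol{y}_i\le\boldsymbol{x}_i\le\beta\boldsymbol{y}_i$ for all $i$. *)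

theory Defs
  imports Complex_Main
begin

definition alpha :: "nat \<Rightarrow> int \<Rightarrow> real" where
  "alpha m U = 1 / (1000 * log 2 (real m * real_of_int U))"

definition len :: "real \<Rightarrow> ('e \<Rightarrow> int) \<Rightarrow> ('e \<Rightarrow> int) \<Rightarrow> ('e \<Rightarrow> real) \<Rightarrow> 'e \<Rightarrow> real" where
  "len a lo up f e =
     (real_of_int (up e) - f e) powr (-1 - a) + (f e - real_of_int (lo e)) powr (-1 - a)"

definition approx :: "'e set \<Rightarrow> real \<Rightarrow> ('e \<Rightarrow> real) \<Rightarrow> ('e \<Rightarrow> real) \<Rightarrow> bool" where
  "approx I \<beta> x y \<longleftrightarrow> (\<forall>i\<in>I. y i / \<beta> \<le> x i \<and> x i \<le> \<beta> * y i)"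

definition linf :: "'e set \<Rightarrow> ('e \<Rightarrow> real) \<Rightarrow> real" where
  "linf I v = (if I = {} then 0 else Max ((\<lambda>i. \<bar>v i\<bar>) ` I))"

end

theory Submission
  imports Defs
begin

text \<open>
  Fix an edge and write s = u+ - f, t = f - u- and d = f - fbar there, so that
  l(f) = s^(-1-\<alpha>) + t^(-1-\<alpha>) and l(fbar) = (s + d)^(-1-\<alpha>) + (t - d)^(-1-\<alpha>).
  The hypothesis gives |d| \<le> \<epsilon> s^(1+\<alpha>), and s \<le> 2U together with the choice of \<alpha>
  gives s^\<alpha> \<le> 2^(1/500) \<le> 1.01, so (s + d)/s is within 1.01\<epsilon> of 1. Since the exponent
  -1-\<alpha> lies in [-2, -1], the quotient (s + d)^(-1-\<alpha>) / s^(-1-\<alpha>) lies between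
  (1 + 1.01\<epsilon>)^(-2) and (1 - 1.01\<epsilon>)^(-2), both within the factor 1 + 3\<epsilon> of 1 when
  \<epsilon> \<le> 1/100. The same holds for t, and the factor survives adding the two terms.
\<close>

definition close_within :: "real \<Rightarrow> real \<Rightarrow> real \<Rightarrow> bool" where
  "close_within \<beta> x y \<longleftrightarrow> x \<le> \<beta> * y \<and> y \<le> \<beta> * x"

lemma close_within_add:
  "close_within \<beta> x y \<Longrightarrow> close_within \<beta> x' y' \<Longrightarrow> close_within \<beta> (x + x') (y + y')"
  by (simp add: close_within_def distrib_left)

lemma close_within_mult_left:
  assumes "0 \<le> c" and "close_within \<beta> x y"
  shows "close_within \<beta> (c * x) (c * y)"
  using assms mult_left_mono[of x "\<beta> * y" c] mult_left_mono[of y "\<beta> * x" c]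
  by (simp add: close_within_def mult.left_commute)

lemma approx_iff_close_within:
  "0 < \<beta> \<Longrightarrow> approx I \<beta> x y \<longleftrightarrow> (\<forall>i\<in>I. close_within \<beta> (x i) (y i))"
  by (auto simp: approx_def close_within_def divide_le_eq mult.commute)

lemma powr_neg_le_inverse_square:
  fixes x a :: real
  assumes "0 < x" "x \<le> 1" "0 \<le> a" "a \<le> 1"
  shows "x powr (-1 - a) \<le> 1 / x\<^sup>2"
proof -
  have "x powr (-1 - a) \<le> x powr (-2)"
    using assms by (intro powr_mono') auto
  also have "\<dots> = 1 / x\<^sup>2"
    using assms by (simp add: powr_minus_divide)
  finally show ?thesis .
qed

lemma inverse_square_le_powr_neg:
  fixes x a :: real
  assumes "1 \<le> x" "0 \<le> a" "a \<le> 1"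
  shows "1 / x\<^sup>2 \<le> x powr (-1 - a)"
proof -
  have "1 / x\<^sup>2 = x powr (-2)"
    using assms by (simp add: powr_minus_divide)
  also have "\<dots> \<le> x powr (-1 - a)"
    using assms by (intro powr_mono) auto
  finally show ?thesis .
qed

lemma close_within_one_powr:
  fixes r a \<epsilon> :: real
  assumes a: "0 \<le> a" "a \<le> 1" and r: "\<bar>r - 1\<bar> \<le> 101/100 * \<epsilon>" and \<epsilon>: "\<epsilon> \<le> 1/100"
  shows "close_within (1 + 3 * \<epsilon>) 1 (r powr (-1 - a))"
proof -
  define \<eta> where "\<eta> = 101/100 * \<epsilon>"
  have \<epsilon>0: "0 \<le> \<epsilon>" using r by linarith
  have \<epsilon>\<epsilon>: "\<epsilon> * \<epsilon> \<le> \<epsilon> / 100" using \<epsilon>0 \<epsilon> mult_left_mono[of \<epsilon> "1/100" \<epsilon>] by simp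
  have \<epsilon>\<epsilon>\<epsilon>: "0 \<le> \<epsilon> * \<epsilon> * \<epsilon>" using \<epsilon>0 by simp
  have \<eta>: "0 \<le> \<eta>" "\<eta> < 1" using \<epsilon>0 \<epsilon> by (auto simp: \<eta>_def)
  have r_between: "1 - \<eta> \<le> r" "r \<le> 1 + \<eta>" using r unfolding \<eta>_def by linarith+
  have "r powr (-1 - a) \<le> (1 - \<eta>) powr (-1 - a)"
    using r_between \<eta> a by (intro powr_mono2') auto
  also have "\<dots> \<le> 1 / (1 - \<eta>)\<^sup>2"
    using \<eta> a by (intro powr_neg_le_inverse_square) auto
  also have "\<dots> \<le> 1 + 3 * \<epsilon>"
  proof -
    have "(1 + 3 * \<epsilon>) * (1 - \<eta>)\<^sup>2
        = 1 + 98/100 * \<epsilon> - 50399/10000 * (\<epsilon> * \<epsilon>) + 30603/10000 * (\<epsilon> * \<epsilon> * \<epsilon>)"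
      by (simp add: \<eta>_def power2_eq_square field_simps)
    then have "1 \<le> (1 + 3 * \<epsilon>) * (1 - \<eta>)\<^sup>2"
      using \<epsilon>\<epsilon> \<epsilon>\<epsilon>\<epsilon> \<epsilon>0 by linarith
    then show ?thesis using \<eta> by (simp add: field_simps)
  qed
  finally have upper: "r powr (-1 - a) \<le> 1 + 3 * \<epsilon>" .
  have "(1 + \<eta>)\<^sup>2 = 1 + 202/100 * \<epsilon> + 10201/10000 * (\<epsilon> * \<epsilon>)"
    by (simp add: \<eta>_def power2_eq_square field_simps)
  then have "(1 + \<eta>)\<^sup>2 \<le> 1 + 3 * \<epsilon>" using \<epsilon>\<epsilon> \<epsilon>0 by linarith
  then have "1 \<le> (1 + 3 * \<epsilon>) * (1 / (1 + \<eta>)\<^sup>2)"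
    using \<eta> by (simp add: field_simps)
  also have "\<dots> \<le> (1 + 3 * \<epsilon>) * (1 + \<eta>) powr (-1 - a)"
    using \<eta> a \<epsilon>0 by (intro mult_left_mono inverse_square_le_powr_neg) auto
  also have "\<dots> \<le> (1 + 3 * \<epsilon>) * r powr (-1 - a)"
    using r_between \<eta> a \<epsilon>0 by (intro mult_left_mono powr_mono2') auto
  finally show ?thesis
    using upper \<epsilon>0 by (simp add: close_within_def)
qed

lemma close_within_powr_perturb:
  fixes s d a \<epsilon> :: real
  assumes s: "0 < s" and a: "0 \<le> a" "a \<le> 1" and s_powr_a: "s powr a \<le> 101/100"
    and d: "\<bar>d\<bar> * s powr (-1 - a) \<le> \<epsilon>" and \<epsilon>: "\<epsilon> \<le> 1/100"
  shows "close_within (1 + 3 * \<epsilon>) (s powr (-1 - a)) ((s + d) powr (-1 - a))"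
proof -
  have "0 \<le> \<bar>d\<bar> * s powr (-1 - a)" by simp
  with d have \<epsilon>0: "0 \<le> \<epsilon>" by linarith
  have "\<bar>d\<bar> = \<bar>d\<bar> * s powr (-1 - a) * (s * s powr a)"
    using s by (simp add: powr_add[symmetric] powr_mult_base)
  also have "\<dots> \<le> \<epsilon> * (s * (101/100))"
    using d s s_powr_a \<epsilon>0 by (intro mult_mono) auto
  finally have "\<bar>d\<bar> / s \<le> 101/100 * \<epsilon>"
    using s by (simp add: field_simps)
  moreover have "\<bar>d\<bar> / s = \<bar>(s + d) / s - 1\<bar>"
    using s by (simp add: field_simps)
  ultimately have ratio: "\<bar>(s + d) / s - 1\<bar> \<le> 101/100 * \<epsilon>" by simp
  then have "0 < (s + d) / s" using \<epsilon> by linarith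
  then have "(s + d) powr (-1 - a) = s powr (-1 - a) * ((s + d) / s) powr (-1 - a)"
    using s by (simp add: powr_divide)
  then show ?thesis
    using close_within_mult_left[OF _ close_within_one_powr[OF a ratio \<epsilon>], of "s powr (-1 - a)"]
    by simp
qed

lemma powr_divide_log:
  fixes b x c :: real
  assumes "1 < b" "1 < x"
  shows "x powr (c / log b x) = b powr c"
proof -
  have "0 < log b x" using assms by simp
  have "x powr (c / log b x) = (b powr log b x) powr (c / log b x)"
    using assms by (subst powr_log_cancel) auto
  also have "\<dots> = b powr (log b x * (c / log b x))"
    by (rule powr_powr)
  also have "\<dots> = b powr c"
    using \<open>0 < log b x\<close> by simp
  finally show ?thesis .
qed

lemma two_powr_inverse_500_le: "2 powr (1/500 :: real) \<le> 101/100"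
proof -
  have "2 powr (1/500 :: real) = exp (ln 2 / 500)" by (simp add: powr_def)
  also have "\<dots> \<le> exp (1/500)" using ln_2_less_1 by simp
  also have "\<dots> \<le> 1 + 1/500 + (1/500)\<^sup>2" by (rule exp_bound) auto
  also have "\<dots> \<le> 101/100" by (simp add: power2_eq_square)
  finally show ?thesis .
qed

text \<open>If m U = 1, the definition of alpha divides by log 2 1 = 0, which yields alpha = 0.\<close>

lemma alpha_cases:
  assumes "1 \<le> m" "1 \<le> U"
  obtains "alpha m U = 0" | "2 \<le> real m * real_of_int U"
proof -
  have cast: "real m * real_of_int U = real_of_int (int m * U)" by simp
  have "1 \<le> int m * U" using assms mult_mono[of 1 "int m" 1 U] by simp
  then consider "int m * U = 1" | "2 \<le> int m * U" by linarith
  then show ?thesis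
  proof cases
    case 1
    then have "alpha m U = 0" by (simp add: alpha_def cast)
    then show ?thesis by (rule that(1))
  next
    case 2
    then have "2 \<le> real m * real_of_int U" unfolding cast by linarith
    then show ?thesis by (rule that(2))
  qed
qed

lemma alpha_nonneg: "1 \<le> m \<Longrightarrow> 1 \<le> U \<Longrightarrow> 0 \<le> alpha m U"
  by (elim alpha_cases) (auto simp: alpha_def)

lemma alpha_le: "1 \<le> m \<Longrightarrow> 1 \<le> U \<Longrightarrow> alpha m U \<le> 1/1000"
  by (elim alpha_cases) (auto simp: alpha_def)

lemma powr_alpha_le:
  assumes m: "1 \<le> m" and U: "1 \<le> U" and s: "0 \<le> s" "s \<le> 2 * real_of_int U"
  shows "s powr alpha m U \<le> 101/100"
  using m U
proof (cases rule: alpha_cases)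
  case 1
  then show ?thesis by simp
next
  case 2
  define x where "x = real m * real_of_int U"
  have x: "2 \<le> x" using 2 by (simp add: x_def)
  have "real_of_int U \<le> x"
    using m U mult_right_mono[of 1 "real m" "real_of_int U"] by (simp add: x_def)
  then have "s \<le> 2 * x" using s by linarith
  also have "\<dots> \<le> x powr 2" using x by (simp add: power2_eq_square)
  finally have "s powr alpha m U \<le> (x powr 2) powr alpha m U"
    using s alpha_nonneg[OF m U] by (intro powr_mono2) auto
  also have "\<dots> = x powr ((1/500) / log 2 x)"
    by (simp add: powr_powr alpha_def x_def)
  also have "\<dots> = 2 powr (1/500)"
    using x by (intro powr_divide_log) auto
  finally show ?thesis using two_powr_inverse_500_le by linarith
qed

lemma linf_nonneg: "finite I \<Longrightarrow> 0 \<le> linf I v"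
  by (auto simp: linf_def intro: order_trans[OF abs_ge_zero Max_ge])

lemma abs_le_linf: "finite I \<Longrightarrow> i \<in> I \<Longrightarrow> \<bar>v i\<bar> \<le> linf I v"
  by (auto simp: linf_def intro!: Max_ge)

lemma len_close_within:
  fixes a \<epsilon> :: real
  assumes a: "0 \<le> a" "a \<le> 1"
    and width: "(real_of_int (up e) - real_of_int (lo e)) powr a \<le> 101/100"
    and inside: "real_of_int (lo e) < f e" "f e < real_of_int (up e)"
    and step: "\<bar>len a lo up f e * (f e - g e)\<bar> \<le> \<epsilon>" and \<epsilon>: "\<epsilon> \<le> 1/100"
  shows "close_within (1 + 3 * \<epsilon>) (len a lo up f e) (len a lo up g e)"
proof -
  define s where "s = real_of_int (up e) - f e"
  define t where "t = f e - real_of_int (lo e)"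
  define d where "d = f e - g e"
  have s: "0 < s" and t: "0 < t" using inside by (auto simp: s_def t_def)
  have len_f: "len a lo up f e = s powr (-1 - a) + t powr (-1 - a)"
    by (simp add: len_def s_def t_def)
  have len_g: "len a lo up g e = (s + d) powr (-1 - a) + (t + - d) powr (-1 - a)"
    by (simp add: len_def s_def t_def d_def)
  have "x powr a \<le> 101/100" if "0 < x" "x \<le> real_of_int (up e) - real_of_int (lo e)" for x
    using that a order_trans[OF powr_mono2 width] by simp
  then have s_powr_a: "s powr a \<le> 101/100" and t_powr_a: "t powr a \<le> 101/100"
    using s t inside by (auto simp: s_def t_def)
  have sum: "\<bar>d\<bar> * s powr (-1 - a) + \<bar>d\<bar> * t powr (-1 - a) \<le> \<epsilon>"
    using step by (simp add: len_f d_def abs_mult distrib_left mult.commute)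
  have nonneg: "0 \<le> \<bar>d\<bar> * s powr (-1 - a)" "0 \<le> \<bar>d\<bar> * t powr (-1 - a)"
    by simp_all
  have "\<bar>d\<bar> * s powr (-1 - a) \<le> \<epsilon>" "\<bar>d\<bar> * t powr (-1 - a) \<le> \<epsilon>"
    using sum nonneg by linarith+
  then show ?thesis
    unfolding len_f len_g
    by (intro close_within_add close_within_powr_perturb s t a s_powr_a t_powr_a \<epsilon>) simp_all
qed

theorem lemma4p9:
  fixes E :: "'e set" and lo up :: "'e \<Rightarrow> int" and U :: int
    and f fbar :: "'e \<Rightarrow> real" and \<epsilon> :: real
  assumes "finite E"
    and "\<forall>e\<in>E. \<bar>lo e\<bar> \<le> U \<and> \<bar>up e\<bar> \<le> U"
    and "\<forall>e\<in>E. real_of_int (lo e) < f e \<and> f e < real_of_int (up e)"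
    and "linf E (\<lambda>e. len (alpha (card E) U) lo up f e * (f e - fbar e)) \<le> \<epsilon>"
    and "\<epsilon> \<le> 1/100"
  shows "approx E (1 + 3 * \<epsilon>) (len (alpha (card E) U) lo up f) (len (alpha (card E) U) lo up fbar)"
proof -
  have "close_within (1 + 3 * \<epsilon>) (len (alpha (card E) U) lo up f e) (len (alpha (card E) U) lo up fbar e)"
    if e: "e \<in> E" for e
  proof (rule len_close_within)
    have m: "1 \<le> card E"
      using assms(1) e card_gt_0_iff[of E] by (auto simp: Suc_le_eq)
    have "real_of_int (lo e) < real_of_int (up e)"
      using assms(3) e by fastforce
    then have "lo e < up e" by simp
    moreover have "\<bar>lo e\<bar> \<le> U" "\<bar>up e\<bar> \<le> U"
      using assms(2) e by simp_all
    ultimately have U: "1 \<le> U" and "up e - lo e \<le> 2 * U" by linarith+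
    then have width: "real_of_int (up e) - real_of_int (lo e) \<le> 2 * real_of_int U"
      by linarith
    show "0 \<le> alpha (card E) U" "alpha (card E) U \<le> 1"
      using alpha_nonneg[OF m U] alpha_le[OF m U] by simp_all
    show "(real_of_int (up e) - real_of_int (lo e)) powr alpha (card E) U \<le> 101/100"
      using powr_alpha_le[OF m U _ width] \<open>lo e < up e\<close> by simp
    show "real_of_int (lo e) < f e" "f e < real_of_int (up e)"
      using assms(3) e by simp_all
    show "\<bar>len (alpha (card E) U) lo up f e * (f e - fbar e)\<bar> \<le> \<epsilon>"
      using abs_le_linf[OF assms(1) e] assms(4) by (rule order_trans)
  qed (fact assms(5))
  moreover have "0 \<le> \<epsilon>"
    using linf_nonneg[OF assms(1)] assms(4) by (rule order_trans)
  ultimately show ?thesis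
    by (simp add: approx_iff_close_within)
qed

end
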